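(* Let $A$ (in $\mathcal H$) and $B$ (in $\mathcal K$) be densely defined operators and suppose $A\dashv B$ with (possibly unbounded) intertwining operator $T$. If the resolvent set $\rho(A)$ is nonempty, then $T$ is bounded (and everywhere defined).
   Context: A closed densely defined operator $T:D(T)\subseteq\mathcal H\to\mathcal K$ is an intertwining operator for $A$ and $B$ if (io0) $D(A)\subseteq D(T)$ and $A\xi\in D(T)$ for all $\xi\in D(A)$ (i.e. $D(TA)=D(A)$); (io1) $TD(A)\subseteq D(B)$; (io2) $BT\xi=TA\xi$ for all $\xi\in D(A)$. $A\dashv B$ (quasi-similarity) means there is such an intertwining operator $T$ which is injective with densely defined inverse $T^{-1}$. $\rho(A)$ is the set of $\lambda\in\mathbb C$ such that $A-\lambda I$ is injective with bounded everywhere defined inverse. *)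

theory Defs
  imports "HOL-Analysis.Analysis"
begin

class complex_vector = real_vector +
  fixes scaleC :: "complex \<Rightarrow> 'a \<Rightarrow> 'a" (infixr \<open>*\<^sub>C\<close> 75)
  assumes scaleC_add_right: "a *\<^sub>C (x + y) = a *\<^sub>C x + a *\<^sub>C y"
    and scaleC_add_left: "(a + b) *\<^sub>C x = a *\<^sub>C x + b *\<^sub>C x"
    and scaleC_scaleC: "a *\<^sub>C (b *\<^sub>C x) = (a * b) *\<^sub>C x"
    and scaleC_one: "1 *\<^sub>C x = x"
    and scaleR_scaleC: "scaleR r x = complex_of_real r *\<^sub>C x"

class complex_inner = complex_vector + real_normed_vector +
  fixes cinner :: "'a \<Rightarrow> 'a \<Rightarrow> complex"
  assumes cinner_commute: "cinner x y = cnj (cinner y x)"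
    and cinner_add_left: "cinner (x + y) z = cinner x z + cinner y z"
    and cinner_scaleC_left: "cinner (r *\<^sub>C x) y = cnj r * cinner x y"
    and cinner_self_nonneg: "0 \<le> Re (cinner x x)"
    and cinner_eq_zero_iff: "cinner x x = 0 \<longleftrightarrow> x = 0"
    and norm_eq_sqrt_cinner: "norm x = sqrt (Re (cinner x x))"

class chilbert_space = complex_inner + complete_space

instantiation complex :: chilbert_space
begin
definition scaleC_complex_def: "scaleC a (x::complex) = a * x"
definition cinner_complex_def: "cinner (x::complex) y = cnj x * y"
instance
proof
  fix x :: complex
  show "norm x = sqrt (Re (cinner x x))"
    by (simp add: cinner_complex_def cmod_def power2_eq_square)
qed (auto simp: scaleC_complex_def cinner_complex_def algebra_simps scaleR_conv_of_real)
end

section \<open>Unbounded operators, represented by a domain and a function\<close>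

definition csubspace :: "'a::complex_vector set \<Rightarrow> bool" where
  "csubspace S \<longleftrightarrow> 0 \<in> S \<and> (\<forall>x\<in>S. \<forall>y\<in>S. x + y \<in> S) \<and> (\<forall>c. \<forall>x\<in>S. c *\<^sub>C x \<in> S)"

definition is_operator :: "'a::complex_vector set \<Rightarrow> ('a \<Rightarrow> 'b::complex_vector) \<Rightarrow> bool" where
  "is_operator D f \<longleftrightarrow> csubspace D \<and>
     (\<forall>x\<in>D. \<forall>y\<in>D. f (x + y) = f x + f y) \<and> (\<forall>c. \<forall>x\<in>D. f (c *\<^sub>C x) = c *\<^sub>C f x)"

definition densely_defined :: "'a::topological_space set \<Rightarrow> bool" where
  "densely_defined D \<longleftrightarrow> closure D = UNIV"

definition closed_operator :: "'a::topological_space set \<Rightarrow> ('a \<Rightarrow> 'b::topological_space) \<Rightarrow> bool" where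
  "closed_operator D f \<longleftrightarrow> closed {(x, f x) | x. x \<in> D}"

definition intertwining ::
  "'a::chilbert_space set \<Rightarrow> ('a \<Rightarrow> 'a) \<Rightarrow> 'b::chilbert_space set \<Rightarrow> ('b \<Rightarrow> 'b)
     \<Rightarrow> 'a set \<Rightarrow> ('a \<Rightarrow> 'b) \<Rightarrow> bool" where
  "intertwining DA A DB B DT T \<longleftrightarrow>
     is_operator DT T \<and> densely_defined DT \<and> closed_operator DT T \<and>
     DA \<subseteq> DT \<and> (\<forall>x\<in>DA. A x \<in> DT) \<and>
     T ` DA \<subseteq> DB \<and>
     (\<forall>x\<in>DA. B (T x) = T (A x))"

text \<open>T is an intertwining operator which is injective with densely defined inverse
  (the domain of T^{-1} is the range of T).\<close>
definition quasi_similarity_op ::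
  "'a::chilbert_space set \<Rightarrow> ('a \<Rightarrow> 'a) \<Rightarrow> 'b::chilbert_space set \<Rightarrow> ('b \<Rightarrow> 'b)
     \<Rightarrow> 'a set \<Rightarrow> ('a \<Rightarrow> 'b) \<Rightarrow> bool" where
  "quasi_similarity_op DA A DB B DT T \<longleftrightarrow>
     intertwining DA A DB B DT T \<and> inj_on T DT \<and> densely_defined (T ` DT)"

definition resolvent_set :: "'a::chilbert_space set \<Rightarrow> ('a \<Rightarrow> 'a) \<Rightarrow> complex set" where
  "resolvent_set D A = {z. inj_on (\<lambda>x. A x - z *\<^sub>C x) D \<and>
     (\<exists>R. (\<forall>y. R y \<in> D \<and> A (R y) - z *\<^sub>C R y = y) \<and>
          (\<forall>x\<in>D. R (A x - z *\<^sub>C x) = x) \<and>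
          (\<exists>C. \<forall>y. norm (R y) \<le> C * norm y))}"

end

theory Submission
  imports Defs
begin

(* Take z in the resolvent set of A with bounded inverse R of A - z.  Every vector y equals
   A (R y) - z (R y), and both R y and A (R y) lie in D(T) by (io0); since D(T) is a subspace,
   D(T) is the whole space.  A closed operator defined on a whole Banach space is bounded by the
   closed graph theorem, which the distribution library does not provide, so it is proved first.

   Section 1 proves the closed graph theorem for real-linear maps between Banach
   spaces along the classical Baire-category route: some sublevel set of x |-> norm (T x) is
   dense in a ball; by linearity it is then dense in a ball around 0; hence every vector is
   approximated by preimages of controlled norm; summing a geometric series of such
   approximations and using closedness of the graph gives the bound.  Section 2 translates the
   operator-theoretic notions of the statement into these terms; the theorem then follows. *)

instance chilbert_space \<subseteq> banach ..

section \<open>The closed graph theorem\<close>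

text \<open>Baire category: a complete metric space covered by the closed sets
  \<open>closure {x. f x \<le> n}\<close> cannot have all of them nowhere dense, so one contains a ball.\<close>

lemma sublevel_closure_contains_ball:
  fixes f :: "'a::complete_space \<Rightarrow> real"
  shows "\<exists>n x0 r. r > 0 \<and> ball x0 r \<subseteq> closure {x. f x \<le> real n}"
proof (rule ccontr)
  assume no_ball: "\<not> ?thesis"
  define S where "S n = closure {x. f x \<le> real n}" for n
  have "Met_TC.mtopology interior_of \<Union>(range S) = {}"
  proof (rule Met_TC.metric_Baire_category_alt)
    show "Met_TC.mcomplete TYPE('a)" by (simp add: complete_UNIV)
    show "countable (range S)" by simp
    fix U assume "U \<in> range S"
    then obtain n where U: "U = S n" by auto
    have "interior U = {}"
    proof (rule ccontr)
      assume "interior U \<noteq> {}"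
      then obtain x where "x \<in> interior U" by auto
      then obtain r where r: "r > 0" "ball x r \<subseteq> interior U"
        using open_contains_ball open_interior by blast
      then have "ball x r \<subseteq> S n" using U interior_subset by blast
      with r(1) have "\<exists>n x0 r. r > 0 \<and> ball x0 r \<subseteq> closure {x. f x \<le> real n}"
        unfolding S_def by blast
      with no_ball show False by blast
    qed
    moreover have "closed U" using U S_def by simp
    ultimately show "closedin Met_TC.mtopology U \<and> Met_TC.mtopology interior_of U = {}"
      by simp
  qed
  moreover have "\<Union>(range S) = UNIV"
  proof -
    have "x \<in> \<Union>(range S)" for x
    proof -
      obtain n where "f x \<le> real n" using real_arch_simple by blast
      then have "x \<in> S n" unfolding S_def by (meson closure_subset mem_Collect_eq subsetD)
      then show ?thesis by blast
    qed
    then show ?thesis by auto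
  qed
  ultimately show False by simp
qed

text \<open>For linear \<open>T\<close>, density of a sublevel set in some ball transfers (at the cost of doubling
  the level) to density in the ball of the same radius around the origin: \<open>z = (x0 + z) - x0\<close>.\<close>

lemma sublevel_closure_centred_ball:
  fixes T :: "'a::real_normed_vector \<Rightarrow> 'b::real_normed_vector"
  assumes lin: "linear T" and ball: "ball x0 r \<subseteq> closure {x. norm (T x) \<le> M}"
    and z: "norm z < r"
  shows "z \<in> closure {x. norm (T x) \<le> 2 * M}"
  unfolding closure_approachable
proof (intro allI impI)
  fix e :: real assume e: "e > 0"
  have "r > 0" using z norm_ge_zero[of z] by linarith
  then have "x0 \<in> closure {x. norm (T x) \<le> M}" "x0 + z \<in> closure {x. norm (T x) \<le> M}"
    using ball z by (auto simp: subset_iff dist_norm)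
  then obtain a b where a: "norm (T a) \<le> M" "dist a (x0 + z) < e/2"
    and b: "norm (T b) \<le> M" "dist b x0 < e/2"
    using e unfolding closure_approachable by (metis half_gt_zero mem_Collect_eq)
  have "norm (T (a - b)) \<le> 2 * M"
    using a b norm_triangle_ineq4[of "T a" "T b"] by (simp add: linear_diff[OF lin])
  moreover have "dist (a - b) z < e"
  proof -
    have "dist (a - b) z = norm ((a - (x0 + z)) - (b - x0))" by (simp add: dist_norm algebra_simps)
    also have "\<dots> \<le> norm (a - (x0 + z)) + norm (b - x0)" by (rule norm_triangle_ineq4)
    also have "\<dots> < e" using a b by (simp add: dist_norm)
    finally show ?thesis .
  qed
  ultimately show "\<exists>y\<in>{x. norm (T x) \<le> 2 * M}. dist y z < e" by blast
qed

lemma approximate_preimage: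
  fixes T :: "'a::real_normed_vector \<Rightarrow> 'b::real_normed_vector"
  assumes lin: "linear T" and r: "r > 0"
    and dense: "\<And>z. norm z < r \<Longrightarrow> z \<in> closure {x. norm (T x) \<le> M}"
    and e: "e > 0"
  shows "\<exists>x. norm (T x) \<le> (2 * M / r) * norm y \<and> norm (y - x) < e"
proof (cases "y = 0")
  case True
  then show ?thesis using e by (auto intro!: exI[of _ 0] simp: linear_0[OF lin])
next
  case False
  define s where "s = r / (2 * norm y)"
  have s: "s > 0" using False r by (simp add: s_def)
  have "norm (s *\<^sub>R y) < r" using False r s by (simp add: s_def)
  then have "s *\<^sub>R y \<in> closure {x. norm (T x) \<le> M}" by (rule dense)
  then obtain a where a: "norm (T a) \<le> M" "dist a (s *\<^sub>R y) < s * e"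
    using s e unfolding closure_approachable by (metis mult_pos_pos mem_Collect_eq)
  define x where "x = a /\<^sub>R s"
  have "norm (T x) = norm (T a) / s"
    using s by (simp add: x_def linear_scale[OF lin] divide_inverse mult.commute)
  also have "\<dots> \<le> M / s" using a s by (simp add: divide_right_mono)
  also have "\<dots> = (2 * M / r) * norm y" using False r by (simp add: s_def field_simps)
  finally have bound: "norm (T x) \<le> (2 * M / r) * norm y" .
  have "y - x = (s *\<^sub>R y - a) /\<^sub>R s" using s by (simp add: x_def algebra_simps)
  then have "norm (y - x) = norm (s *\<^sub>R y - a) / s" using s by (simp add: divide_inverse mult.commute)
  also have "\<dots> < e" using a s by (simp add: dist_norm norm_minus_commute field_simps)
  finally show ?thesis using bound by blast
qed

text \<open>At step \<open>k\<close> the remainder is approximated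
  to within \<open>norm y / 2^(k+1)\<close>.\<close>

lemma preimage_series:
  fixes T :: "'a::real_normed_vector \<Rightarrow> 'b::real_normed_vector"
  assumes K: "K \<ge> 0" and y: "y \<noteq> 0"
    and approx: "\<And>y e. e > 0 \<Longrightarrow> \<exists>x. norm (T x) \<le> K * norm y \<and> norm (y - x) < e"
  shows "\<exists>x. (\<lambda>N. \<Sum>k<N. x k) \<longlonglongrightarrow> y \<and> (\<forall>k. norm (T (x k)) \<le> (K * norm y) * (1/2) ^ k)"
proof -
  define c where "c = norm y"
  have c: "c > 0" using y by (simp add: c_def)
  define step where
    "step z k = (SOME x. norm (T x) \<le> K * norm z \<and> norm (z - x) < c / 2 ^ Suc k)" for z k
  have step: "norm (T (step z k)) \<le> K * norm z \<and> norm (z - step z k) < c / 2 ^ Suc k" for z k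
  proof -
    have "c / 2 ^ Suc k > 0" using c by simp
    from approx[OF this] show ?thesis unfolding step_def by (rule someI_ex)
  qed
  define rest where "rest = rec_nat y (\<lambda>k z. z - step z k)"
  have rest_0: "rest 0 = y" and rest_Suc: "rest (Suc k) = rest k - step (rest k) k" for k
    by (simp_all add: rest_def)
  define x where "x k = step (rest k) k" for k
  have rest_bound: "norm (rest k) \<le> c / 2 ^ k" for k
  proof (cases k)
    case 0 then show ?thesis by (simp add: rest_0 c_def)
  next
    case (Suc m)
    then show ?thesis using step[of "rest m" m] by (simp add: rest_Suc)
  qed
  have "norm (T (x k)) \<le> (K * c) * (1/2) ^ k" for k
  proof -
    have "norm (T (x k)) \<le> K * norm (rest k)" using step[of "rest k" k] by (simp add: x_def)
    also have "\<dots> \<le> K * (c / 2 ^ k)" using rest_bound[of k] K by (rule mult_left_mono)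
    finally show ?thesis by (simp add: power_divide)
  qed
  moreover have "(\<lambda>N. \<Sum>k<N. x k) \<longlonglongrightarrow> y"
  proof -
    have partial: "(\<Sum>k<N. x k) = y - rest N" for N
      using sum_lessThan_telescope'[of rest N] by (simp add: rest_Suc x_def rest_0)
    have "(\<lambda>N. c * (1/2) ^ N) \<longlonglongrightarrow> 0"
      using tendsto_mult_left[OF LIMSEQ_power_zero[of "1/2::real"], of c] by simp
    then have "rest \<longlonglongrightarrow> 0"
      by (rule Lim_null_comparison[rotated]) (auto simp: rest_bound power_divide)
    then show ?thesis
      unfolding partial using tendsto_diff[OF tendsto_const[of y], of rest 0] by simp
  qed
  ultimately show ?thesis unfolding c_def by blast
qed

text \<open>With a closed graph, \<open>T\<close> commutes with the sum of such a series, whence the bound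
  \<open>norm (T y) \<le> 2 K norm y\<close>.\<close>

lemma closed_graph_approximation_bound:
  fixes T :: "'a::real_normed_vector \<Rightarrow> 'b::banach"
  assumes lin: "linear T" and K: "K \<ge> 0"
    and approx: "\<And>y e. e > 0 \<Longrightarrow> \<exists>x. norm (T x) \<le> K * norm y \<and> norm (y - x) < e"
    and closed_graph: "\<And>xs x w. xs \<longlonglongrightarrow> x \<Longrightarrow> (\<lambda>n. T (xs n)) \<longlonglongrightarrow> w \<Longrightarrow> T x = w"
  shows "norm (T y) \<le> 2 * K * norm y"
proof (cases "y = 0")
  case True
  then show ?thesis by (simp add: linear_0[OF lin])
next
  case False
  then obtain x where sum_x: "(\<lambda>N. \<Sum>k<N. x k) \<longlonglongrightarrow> y"
    and decay: "\<And>k. norm (T (x k)) \<le> (K * norm y) * (1/2) ^ k"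
    using preimage_series[OF K _ approx] by blast
  have geometric: "summable (\<lambda>k. (K * norm y) * (1/2::real) ^ k)"
    by (intro summable_mult summable_geometric) simp
  have "summable (\<lambda>k. T (x k))"
    by (rule summable_comparison_test[OF _ geometric]) (auto intro: decay)
  then have "(\<lambda>N. T (\<Sum>k<N. x k)) \<longlonglongrightarrow> (\<Sum>k. T (x k))"
    using summable_LIMSEQ by (simp add: linear_sum[OF lin])
  from closed_graph[OF sum_x this] have "norm (T y) = norm (\<Sum>k. T (x k))" by simp
  also have "\<dots> \<le> (\<Sum>k. (K * norm y) * (1/2::real) ^ k)"
    by (rule norm_suminf_le[OF decay geometric])
  also have "\<dots> = 2 * K * norm y"
    using suminf_geometric[of "1/2::real"] by (simp add: suminf_mult)
  finally show ?thesis .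
qed

theorem closed_graph_theorem:
  fixes T :: "'a::banach \<Rightarrow> 'b::banach"
  assumes lin: "linear T"
    and closed_graph: "\<And>xs x w. xs \<longlonglongrightarrow> x \<Longrightarrow> (\<lambda>n. T (xs n)) \<longlonglongrightarrow> w \<Longrightarrow> T x = w"
  shows "\<exists>C. \<forall>x. norm (T x) \<le> C * norm x"
proof -
  obtain n x0 r where r: "r > 0" and ball: "ball x0 r \<subseteq> closure {x. norm (T x) \<le> real n}"
    using sublevel_closure_contains_ball[of "\<lambda>x. norm (T x)"] by blast
  define K where "K = 2 * (2 * real n) / r"
  have approx: "\<exists>x. norm (T x) \<le> K * norm y \<and> norm (y - x) < e" if "e > 0" for y e
    unfolding K_def
    by (rule approximate_preimage[OF lin r sublevel_closure_centred_ball[OF lin ball] that])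
  have K: "K \<ge> 0" using r by (simp add: K_def)
  have "\<forall>x. norm (T x) \<le> (2 * K) * norm x"
  proof
    fix x
    show "norm (T x) \<le> (2 * K) * norm x"
    proof (rule closed_graph_approximation_bound[OF lin K])
      show "\<exists>x. norm (T x) \<le> K * norm y \<and> norm (y - x) < e" if "e > 0" for y e
        using approx[OF that] .
    qed (rule closed_graph)
  qed
  then show ?thesis by (rule exI)
qed

section \<open>Operators with domain: translation to the closed graph setting\<close>

lemma everywhere_defined_operator_linear:
  assumes "is_operator UNIV T"
  shows "linear T"
proof (rule linearI)
  show "T (x + y) = T x + T y" for x y using assms by (simp add: is_operator_def)
  show "T (r *\<^sub>R x) = r *\<^sub>R T x" for r x
    using assms by (simp add: is_operator_def scaleR_scaleC)
qed

lemma closed_operator_sequential: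
  assumes "closed_operator D T" and "\<And>n. xs n \<in> D"
    and "xs \<longlonglongrightarrow> x" and "(\<lambda>n. T (xs n)) \<longlonglongrightarrow> w"
  shows "x \<in> D \<and> T x = w"
proof -
  have "(\<lambda>n. (xs n, T (xs n))) \<longlonglongrightarrow> (x, w)" using assms(3,4) by (rule tendsto_Pair)
  moreover have "\<forall>n. (xs n, T (xs n)) \<in> {(x, T x) | x. x \<in> D}" using assms(2) by blast
  moreover have "closed {(x, T x) | x. x \<in> D}"
    using assms(1) unfolding closed_operator_def .
  ultimately have "(x, w) \<in> {(x, T x) | x. x \<in> D}" by (meson closed_sequentially)
  then show ?thesis by auto
qed

text \<open>If a subspace contains \<open>D(A)\<close> and \<open>A D(A)\<close> and the resolvent set of \<open>A\<close> is nonempty, the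
  subspace is everything: each \<open>y\<close> equals \<open>A (R y) - z R y\<close> with \<open>R = (A - z)^-1\<close>.\<close>

lemma subspace_containing_graph_of_resolvent_operator:
  assumes D: "csubspace D" and dom: "DA \<subseteq> D" and ran: "\<forall>x\<in>DA. A x \<in> D"
    and z: "z \<in> resolvent_set DA A"
  shows "D = UNIV"
proof -
  obtain R where R: "\<And>y. R y \<in> DA \<and> A (R y) - z *\<^sub>C R y = y"
    using z unfolding resolvent_set_def by blast
  have "y \<in> D" for y
  proof -
    have "R y \<in> D" "A (R y) \<in> D" using R dom ran by blast+
    then have "A (R y) + (-1) *\<^sub>C (z *\<^sub>C R y) \<in> D"
      using D unfolding csubspace_def by blast
    moreover have "(-1::complex) *\<^sub>C v = - v" for v :: 'a
      using scaleR_scaleC[of "-1" v] by simp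
    ultimately show ?thesis using R[of y] by simp
  qed
  then show ?thesis by blast
qed

theorem proposition3p17:
  fixes DA :: "'a::chilbert_space set" and A :: "'a \<Rightarrow> 'a"
    and DB :: "'b::chilbert_space set" and B :: "'b \<Rightarrow> 'b"
    and DT :: "'a set" and T :: "'a \<Rightarrow> 'b"
  assumes "is_operator DA A" and "densely_defined DA"
    and "is_operator DB B" and "densely_defined DB"
    and "quasi_similarity_op DA A DB B DT T"
    and "resolvent_set DA A \<noteq> {}"
  shows "DT = UNIV \<and> (\<exists>C. \<forall>x. norm (T x) \<le> C * norm x)"
proof -
  have op: "is_operator DT T" and closed: "closed_operator DT T"
    and dom: "DA \<subseteq> DT" and ran: "\<forall>x\<in>DA. A x \<in> DT"
    using assms(5) by (simp_all add: quasi_similarity_op_def intertwining_def)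
  obtain z where z: "z \<in> resolvent_set DA A" using assms(6) by blast
  have "csubspace DT" using op by (simp add: is_operator_def)
  then have everywhere: "DT = UNIV"
    using subspace_containing_graph_of_resolvent_operator[OF _ dom ran z] by blast
  have "\<exists>C. \<forall>x. norm (T x) \<le> C * norm x"
  proof (rule closed_graph_theorem)
    show "linear T" using op everywhere everywhere_defined_operator_linear by blast
    show "T x = w" if "xs \<longlonglongrightarrow> x" "(\<lambda>n. T (xs n)) \<longlonglongrightarrow> w" for xs x w
      using closed_operator_sequential[OF closed _ that] by (simp add: everywhere)
  qed
  with everywhere show ?thesis by blast
qed

end
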